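(* Let $\lambda>0$ and let $\{a_n\}_{n\geq0}$ be a real sequence. Let $s^{(0)}_n=\sum_{j=0}^na_j$ and for $k\geq1$ let $s^{(k)}_n=\sum_{j=0}^ns^{(k-1)}_j$. Suppose that for some $k\geq0$: (i) $s^{(k)}_n\geq0$ for all $n\geq0$; (ii) $s^{(k)}_n/n^\lambda\to0$ as $n\to\infty$; (iii) $\sum_{n=1}^\infty s^{(k)}_n/n^{1+\lambda}<\infty$. Then the series $$f(x)=\sum_{n=0}^\infty\frac{a_n}{(x+n)^\lambda},\qquad x>0,$$ converges and $f$ is a generalized Stieltjes function of order $\lambda+k+1$. It has the representation $$f(x)=\int_0^\infty\frac{d\mu(t)}{(x+t)^{\lambda+k+1}}=\frac{1}{\Gamma(\lambda)}\int_0^\infty e^{-xt}t^{\lambda+k}\kappa(t)\,dt,$$ where $$d\mu(t)=\frac{(\lambda)_{k+1}}{k!}\sum_{n=0}^\infty a_n\chi_{(n,\infty)}(t)(t-n)^k\,dt$$ is a positive measure, and $$\kappa(t)=\frac{1}{t^{k+1}}\sum_{n=0}^\infty a_ne^{-nt}$$ is completely monotonic on $(0,\infty)$.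
   Context: For $\rho>0$, a generalized Stieltjes function of order $\rho$ is a function $F:(0,\infty)\to\mathbb R$ of the form $F(x)=\int_0^\infty\frac{d\mu(t)}{(x+t)^\rho}+c$ with $\mu$ a positive measure on $[0,\infty)$ making the integral converge for $x>0$ and $c\geq0$. $(\lambda)_{m}=\lambda(\lambda+1)\cdots(\lambda+m-1)$ is the Pochhammer symbol, $\chi_I$ the indicator function of $I$. A function is completely monotonic on $(0,\infty)$ if it is $C^\infty$ with $(-1)^mg^{(m)}\geq0$ for all $m\geq0$. *)

theory Defs
  imports "HOL-Analysis.Analysis"
begin

fun iter_psum :: "(nat \<Rightarrow> real) \<Rightarrow> nat \<Rightarrow> nat \<Rightarrow> real" where
  "iter_psum a 0 n = (\<Sum>j=0..n. a j)"
| "iter_psum a (Suc k) n = (\<Sum>j=0..n. iter_psum a k j)"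

definition gen_stieltjes :: "real \<Rightarrow> (real \<Rightarrow> real) \<Rightarrow> bool" where
  "gen_stieltjes \<rho> F \<longleftrightarrow>
     (\<exists>(\<mu>::real measure) c. sets \<mu> = sets borel \<and> emeasure \<mu> {..<0} = 0 \<and> c \<ge> 0 \<and>
        (\<forall>x>0. integrable \<mu> (\<lambda>t. 1 / (x + t) powr \<rho>) \<and>
               F x = (\<integral>t. 1 / (x + t) powr \<rho> \<partial>\<mu>) + c))"

definition completely_monotonic_on :: "real set \<Rightarrow> (real \<Rightarrow> real) \<Rightarrow> bool" where
  "completely_monotonic_on S g \<longleftrightarrow>
     (\<forall>m. \<forall>x\<in>S. ((deriv ^^ m) g) differentiable (at x)) \<and>
     (\<forall>m. \<forall>x\<in>S. (-1) ^ m * (deriv ^^ m) g x \<ge> 0)"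

end

theory Submission
  imports Defs "HOL-Real_Asymp.Real_Asymp"
begin

text \<open>Put \<open>S = iter_psum a k\<close>. Summing by parts \<open>k + 1\<close> times rewrites \<open>f x\<close>,
  \<open>\<Sum>n. a n * exp (- n * t)\<close> and \<open>g t\<close> as series in \<open>S\<close> with nonnegative weights: the signed
  \<open>(k + 1)\<close>-st differences of \<open>n \<mapsto> (x + n) powr -lam\<close>, the factor
  \<open>(1 - exp (- t)) ^ (k + 1) * exp (- n * t)\<close>, and the shifted cardinal B-splines
  \<open>bspline k (t - n)\<close>. Since \<open>bspline k \<ge> 0\<close> has Laplace transform
  \<open>((1 - exp (- t)) / t) ^ (k + 1)\<close>, \<open>\<kappa>\<close> is the Laplace transform of the nonnegative function
  \<open>g / pochhammer lam (k + 1)\<close> and hence completely monotonic. Writing \<open>(x + n) powr -lam\<close> and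
  \<open>(x + s) powr -(lam + k + 1)\<close> as Gamma integrals and applying Tonelli yields the two integral
  representations of \<open>f\<close>. The growth hypotheses on \<open>S\<close> make the boundary terms of the
  summations by parts vanish and the resulting series converge.\<close>

section \<open>Gamma integrals\<close>

lemma nn_integral_gamma_kernel:
  fixes y p :: real
  assumes y: "y > 0" and p: "p > 0"
  shows "(\<integral>\<^sup>+u. ennreal (indicator {0<..} u * u powr (p - 1) * exp (- (y * u))) \<partial>lborel)
       = ennreal (Gamma p / y powr p)"
proof -
  let ?f = "\<lambda>u. ennreal (indicator {0<..} u * u powr (p - 1) * exp (- (y * u)))"
  have "(\<integral>\<^sup>+u. ?f u \<partial>lborel) = \<bar>1/y\<bar> * (\<integral>\<^sup>+x. ?f (0 + (1/y) * x) \<partial>lborel)"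
    by (rule nn_integral_real_affine) (use y in auto)
  also have "(\<lambda>x. ?f (0 + (1/y) * x)) = (\<lambda>x. ennreal (y powr (1 - p)) *
        ennreal (indicator {0..} x * x powr (p - 1) / exp x))"
  proof
    fix x :: real
    show "?f (0 + (1/y) * x) =
        ennreal (y powr (1 - p)) * ennreal (indicator {0..} x * x powr (p - 1) / exp x)"
    proof (cases "x > 0")
      case True
      have "(x / y) powr (p - 1) = y powr (1 - p) * x powr (p - 1)"
        using True y by (simp add: powr_divide powr_diff divide_simps)
      then show ?thesis
        using True y by (simp add: ennreal_mult'[symmetric] indicator_def exp_minus field_simps)
    next
      case False
      then show ?thesis
        using y by (cases "x = 0") (auto simp: indicator_def zero_less_divide_iff)
    qed
  qed
  also have "(\<integral>\<^sup>+x. ennreal (y powr (1 - p)) *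
        ennreal (indicator {0..} x * x powr (p - 1) / exp x) \<partial>lborel)
      = ennreal (y powr (1 - p)) * Gamma p"
    by (subst nn_integral_cmult) (auto simp: Gamma_conv_nn_integral_real[OF p])
  also have "ennreal \<bar>1/y\<bar> * (ennreal (y powr (1 - p)) * ennreal (Gamma p))
      = ennreal (Gamma p / y powr p)"
    using y p Gamma_real_pos[OF p] by (simp add: ennreal_mult'[symmetric] powr_diff divide_simps)
  finally show ?thesis .
qed

lemma
  fixes y p :: real
  assumes "y > 0" and "p > 0"
  shows integrable_gamma_kernel:
      "integrable lborel (\<lambda>u. indicator {0<..} u * u powr (p - 1) * exp (- (y * u)))"
    and integral_gamma_kernel:
      "(\<integral>u. indicator {0<..} u * u powr (p - 1) * exp (- (y * u)) \<partial>lborel) = Gamma p / y powr p"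
  using nn_integral_gamma_kernel[OF assms] Gamma_real_pos[OF assms(2)]
  by (subst (asm) nn_integral_eq_integrable; force simp: indicator_def)+

section \<open>Truncated powers and B-splines\<close>

definition trunc_power :: "nat \<Rightarrow> real \<Rightarrow> real" where
  "trunc_power k y = (if y > 0 then y ^ k / fact k else 0)"

definition bdiff :: "(real \<Rightarrow> real) \<Rightarrow> real \<Rightarrow> real" where
  "bdiff \<phi> y = \<phi> y - \<phi> (y - 1)"

definition bspline :: "nat \<Rightarrow> real \<Rightarrow> real" where
  "bspline k = (bdiff ^^ Suc k) (trunc_power k)"

lemma funpow_bdiff_Suc: "(bdiff ^^ Suc n) \<phi> y = (bdiff ^^ n) \<phi> y - (bdiff ^^ n) \<phi> (y - 1)"
  by (simp add: bdiff_def)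

lemma funpow_bdiff_cmult: "(bdiff ^^ n) (\<lambda>y. c * \<phi> y) y = c * (bdiff ^^ n) \<phi> y"
  by (induction n arbitrary: y) (simp_all add: bdiff_def algebra_simps)

lemma funpow_bdiff_mult_id:
  "(bdiff ^^ Suc n) (\<lambda>y. y * \<phi> y) y
     = y * (bdiff ^^ Suc n) \<phi> y + real (Suc n) * (bdiff ^^ n) \<phi> (y - 1)"
proof (induction n arbitrary: y)
  case 0
  then show ?case by (simp add: bdiff_def algebra_simps)
next
  case (Suc n)
  show ?case
    unfolding funpow_bdiff_Suc[of "Suc n" "\<lambda>y. y * \<phi> y"] Suc funpow_bdiff_Suc[of "Suc n" \<phi>]
      funpow_bdiff_Suc[of n \<phi>]
    by (simp add: algebra_simps)
qed

lemma bspline_Suc: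
  "real (Suc k) * bspline (Suc k) y = y * bspline k y + (real k + 2 - y) * bspline k (y - 1)"
proof -
  have "real (Suc k) * trunc_power (Suc k) y = y * trunc_power k y" for y
    by (simp add: trunc_power_def fact_Suc divide_simps del: of_nat_Suc)
  then have "real (Suc k) * bspline (Suc k) y = (bdiff ^^ Suc (Suc k)) (\<lambda>y. y * trunc_power k y) y"
    unfolding bspline_def funpow_bdiff_cmult[symmetric] by simp
  then show ?thesis
    unfolding funpow_bdiff_mult_id bspline_def funpow_bdiff_Suc[of "Suc k" "trunc_power k" y]
    by (simp add: algebra_simps)
qed

lemma funpow_bdiff_trunc_power_nonpos: "y \<le> 0 \<Longrightarrow> (bdiff ^^ n) (trunc_power k) y = 0"
  by (induction n arbitrary: y) (simp_all add: trunc_power_def bdiff_def)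

lemma bspline_nonpos: "y \<le> 0 \<Longrightarrow> bspline k y = 0"
  unfolding bspline_def by (rule funpow_bdiff_trunc_power_nonpos)

text \<open>The vanishing beyond \<open>k + 1\<close> is carried along the induction because the recurrence
  \<open>bspline_Suc\<close> has the coefficient \<open>k + 2 - y\<close>, which is negative only where
  \<open>bspline k (y - 1)\<close> vanishes.\<close>
lemma bspline_nonneg_and_vanishing: "bspline k y \<ge> 0 \<and> (y > real k + 1 \<longrightarrow> bspline k y = 0)"
proof (induction k arbitrary: y)
  case 0
  show ?case by (auto simp: bspline_def bdiff_def trunc_power_def)
next
  case (Suc k)
  have rec: "bspline (Suc k) y = (y * bspline k y + (real k + 2 - y) * bspline k (y - 1)) / real (Suc k)"
    using bspline_Suc[of k y] by (simp add: field_simps)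
  consider "y \<le> 0" | "y > real k + 2" | "0 < y" "y \<le> real k + 2"
    by linarith
  then show ?case
  proof cases
    case 1
    then show ?thesis by (simp add: bspline_nonpos)
  next
    case 2
    then show ?thesis using Suc[of y] Suc[of "y - 1"] rec by simp
  next
    case 3
    then show ?thesis using Suc[of y] Suc[of "y - 1"] rec
      by (auto intro!: divide_nonneg_pos add_nonneg_nonneg mult_nonneg_nonneg)
  qed
qed

lemma bspline_nonneg: "bspline k y \<ge> 0"
  using bspline_nonneg_and_vanishing by blast

lemma trunc_power_measurable [measurable]: "trunc_power k \<in> borel_measurable borel"
  unfolding trunc_power_def[abs_def] by measurable

lemma funpow_bdiff_measurable [measurable]:
  assumes [measurable]: "\<phi> \<in> borel_measurable borel"
  shows "(bdiff ^^ n) \<phi> \<in> borel_measurable borel"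
proof (induction n)
  case (Suc n)
  note [measurable] = Suc
  have "(bdiff ^^ Suc n) \<phi> = (\<lambda>y. (bdiff ^^ n) \<phi> y - (bdiff ^^ n) \<phi> (y - 1))"
    using funpow_bdiff_Suc by blast
  then show ?case by simp
qed simp

lemma bspline_measurable [measurable]: "bspline k \<in> borel_measurable borel"
  unfolding bspline_def by measurable

lemma laplace_funpow_bdiff_trunc_power:
  fixes t :: real
  assumes t: "t > 0"
  shows "integrable lborel (\<lambda>u. exp (- (u * t)) * (bdiff ^^ n) (trunc_power k) u)
    \<and> (\<integral>u. exp (- (u * t)) * (bdiff ^^ n) (trunc_power k) u \<partial>lborel)
        = (1 - exp (- t)) ^ n / t ^ Suc k"
proof (induction n)
  case 0
  have "(\<lambda>u. exp (- (u * t)) * (bdiff ^^ 0) (trunc_power k) u) =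
      (\<lambda>u. (1 / fact k) * (indicator {0<..} u * u powr (real (Suc k) - 1) * exp (- (t * u))))"
    by (auto simp: trunc_power_def indicator_def powr_realpow mult.commute)
  moreover have "Gamma (real (Suc k)) = fact k"
    using Gamma_fact[of k] by simp
  moreover have "t powr (1 + real k) = t * t ^ k"
    using powr_realpow[OF t, of "Suc k"] by simp
  ultimately show ?case
    using integrable_gamma_kernel[OF t, of "real (Suc k)"] integral_gamma_kernel[OF t, of "real (Suc k)"]
    by simp
next
  case (Suc n)
  define F where "F = (\<lambda>u. exp (- (u * t)) * (bdiff ^^ n) (trunc_power k) u)"
  have F_integrable: "integrable lborel F"
    and F_integral: "integral\<^sup>L lborel F = (1 - exp (- t)) ^ n / t ^ Suc k"
    using Suc by (auto simp: F_def)
  have shifted_F_integrable: "integrable lborel (\<lambda>x. F (-1 + 1 * x))"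
    by (rule lborel_integrable_real_affine[OF F_integrable]) simp
  have shifted_F_integral: "integral\<^sup>L lborel F = integral\<^sup>L lborel (\<lambda>x. F (-1 + 1 * x))"
    using lborel_integral_real_affine[of 1 F "-1"] by simp
  have eq: "(\<lambda>u. exp (- (u * t)) * (bdiff ^^ Suc n) (trunc_power k) u) =
      (\<lambda>u. F u - exp (- t) * F (-1 + 1 * u))"
  proof
    fix u
    have "exp (- t) * exp (- ((-1 + 1 * u) * t)) = exp (- (u * t))"
      by (simp add: mult_exp_exp algebra_simps)
    then show "exp (- (u * t)) * (bdiff ^^ Suc n) (trunc_power k) u = F u - exp (- t) * F (-1 + 1 * u)"
      unfolding funpow_bdiff_Suc F_def mult.assoc[symmetric] by (simp add: algebra_simps)
  qed
  show ?case
    unfolding eq using F_integrable F_integral shifted_F_integrable shifted_F_integral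
    by (simp add: algebra_simps add_divide_distrib[symmetric])
qed

lemma laplace_bspline_shift:
  fixes t :: real
  assumes t: "t > 0"
  shows "(\<integral>\<^sup>+s. ennreal (exp (- (s * t)) * bspline k (s - c)) \<partial>lborel)
      = ennreal (exp (- (c * t)) * ((1 - exp (- t)) ^ Suc k / t ^ Suc k))"
proof -
  have laplace: "(\<integral>\<^sup>+u. ennreal (exp (- (u * t)) * bspline k u) \<partial>lborel)
      = ennreal ((1 - exp (- t)) ^ Suc k / t ^ Suc k)"
    using laplace_funpow_bdiff_trunc_power[OF t, of "Suc k" k] unfolding bspline_def[symmetric]
    by (subst nn_integral_eq_integral) (auto intro!: AE_I2 mult_nonneg_nonneg bspline_nonneg)
  have "(\<integral>\<^sup>+s. ennreal (exp (- (s * t)) * bspline k (s - c)) \<partial>lborel)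
      = ennreal \<bar>1\<bar> * (\<integral>\<^sup>+u. ennreal (exp (- ((c + 1 * u) * t)) * bspline k ((c + 1 * u) - c)) \<partial>lborel)"
    by (rule nn_integral_real_affine) auto
  also have "\<dots> = (\<integral>\<^sup>+u. ennreal (exp (- ((c + 1 * u) * t)) * bspline k ((c + 1 * u) - c)) \<partial>lborel)"
    by (simp only: abs_one ennreal_1 mult_1)
  also have "\<dots> = (\<integral>\<^sup>+u. ennreal (exp (- (c * t))) * ennreal (exp (- (u * t)) * bspline k u) \<partial>lborel)"
    by (intro nn_integral_cong)
       (simp add: ennreal_mult'[symmetric] algebra_simps exp_diff exp_minus field_simps)
  also have "\<dots> = ennreal (exp (- (c * t))) * (\<integral>\<^sup>+u. ennreal (exp (- (u * t)) * bspline k u) \<partial>lborel)"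
    by (rule nn_integral_cmult) measurable
  finally show ?thesis
    unfolding laplace by (simp add: ennreal_mult'[symmetric])
qed

lemma funpow_bdiff_trunc_power_shift_eventually_zero:
  "eventually (\<lambda>n. (bdiff ^^ j) (trunc_power k) (t - real n) = 0) at_top"
  using eventually_ge_at_top[of "nat \<lceil>t\<rceil>"]
  by eventually_elim (rule funpow_bdiff_trunc_power_nonpos, linarith)

lemma summable_bspline_shifts: "summable (\<lambda>n. c n * bspline k (t - real n))"
proof (rule summable_finite[of "{..<nat \<lceil>t\<rceil>}"])
  fix n assume "n \<notin> {..<nat \<lceil>t\<rceil>}"
  then have "real (nat \<lceil>t\<rceil>) \<le> real n"
    by (simp only: lessThan_iff not_less of_nat_le_iff)
  then have "t - real n \<le> 0"
    using real_nat_ceiling_ge[of t] by linarith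
  then show "c n * bspline k (t - real n) = 0" by (simp add: bspline_nonpos)
qed simp

section \<open>Summation by parts\<close>

definition psum :: "(nat \<Rightarrow> real) \<Rightarrow> nat \<Rightarrow> real" where
  "psum b n = (\<Sum>j\<le>n. b j)"

lemma psum_0 [simp]: "psum b 0 = b 0"
  and psum_Suc [simp]: "psum b (Suc n) = psum b n + b (Suc n)"
  by (simp_all add: psum_def)

lemma iter_psum_eq_funpow_psum: "iter_psum a k = (psum ^^ Suc k) a"
  by (induction k) (simp_all add: fun_eq_iff psum_def atLeast0AtMost)

lemma abel_summation_finite:
  "(\<Sum>n<Suc N. b n * w n)
     = (\<Sum>n<Suc N. psum b n * (w n - w (Suc n))) + psum b N * w (Suc N)"
  by (induction N) (simp_all add: algebra_simps)

lemma abel_summation: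
  assumes "summable (\<lambda>n. psum b n * (w n - w (Suc n)))"
    and "(\<lambda>N. psum b N * w (Suc N)) \<longlonglongrightarrow> 0"
  shows "(\<lambda>n. b n * w n) sums (\<Sum>n. psum b n * (w n - w (Suc n)))"
proof -
  have "(\<lambda>N. (\<Sum>n<Suc N. psum b n * (w n - w (Suc n))) + psum b N * w (Suc N))
      \<longlonglongrightarrow> (\<Sum>n. psum b n * (w n - w (Suc n))) + 0"
    using assms(1)[THEN summable_LIMSEQ, THEN LIMSEQ_Suc] assms(2) by (rule tendsto_add)
  also have "(\<lambda>N. (\<Sum>n<Suc N. psum b n * (w n - w (Suc n))) + psum b N * w (Suc N))
      = (\<lambda>N. \<Sum>n<Suc N. b n * w n)"
    by (rule ext) (rule abel_summation_finite[symmetric])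
  finally have "(\<lambda>N. \<Sum>n<Suc N. b n * w n) \<longlonglongrightarrow> (\<Sum>n. psum b n * (w n - w (Suc n)))"
    by simp
  then show ?thesis
    unfolding sums_def by (rule LIMSEQ_imp_Suc)
qed

lemma iterated_abel_summation:
  assumes "\<And>j n. j < K \<Longrightarrow> W (Suc j) n = W j n - W j (Suc n)"
    and "\<And>j. j < K \<Longrightarrow> (\<lambda>N. (psum ^^ Suc j) b N * W j (Suc N)) \<longlonglongrightarrow> 0"
    and "summable (\<lambda>n. (psum ^^ K) b n * W K n)"
  shows "(\<lambda>n. b n * W 0 n) sums (\<Sum>n. (psum ^^ K) b n * W K n)"
  using assms
proof (induction K)
  case 0
  then show ?case by (simp add: summable_sums)
next
  case (Suc K)
  have W_Suc: "W (Suc K) n = W K n - W K (Suc n)" for n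
    using Suc.prems(1) by blast
  have "(\<lambda>n. (psum ^^ K) b n * W K n) sums (\<Sum>n. psum ((psum ^^ K) b) n * (W K n - W K (Suc n)))"
    using Suc.prems(2,3) by (intro abel_summation) (simp_all add: W_Suc)
  then have "(\<lambda>n. (psum ^^ K) b n * W K n) sums (\<Sum>n. (psum ^^ Suc K) b n * W (Suc K) n)"
    by (simp add: W_Suc)
  with Suc.IH Suc.prems(1,2) show ?case
    by (simp add: sums_iff)
qed

lemma sums_power_series_psum:
  assumes "(\<lambda>n. psum b n * z ^ n) sums s"
  shows "(\<lambda>n. b n * z ^ n) sums ((1 - z) * s)"
proof -
  have telescoped: "(\<lambda>n. psum b n * (z ^ n - z ^ Suc n)) sums ((1 - z) * s)"
    using sums_mult[OF assms, of "1 - z"] by (simp add: algebra_simps)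
  have "(\<lambda>N. z * (psum b N * z ^ N)) \<longlonglongrightarrow> z * 0"
    using assms by (intro tendsto_mult tendsto_const summable_LIMSEQ_zero) (rule sums_summable)
  then have "(\<lambda>n. b n * z ^ n) sums (\<Sum>n. psum b n * (z ^ n - z ^ Suc n))"
    using telescoped by (intro abel_summation) (auto simp: sums_iff algebra_simps)
  with telescoped show ?thesis
    by (simp add: sums_iff)
qed

lemma sums_power_series_funpow_psum:
  assumes "(\<lambda>n. (psum ^^ K) b n * z ^ n) sums s"
  shows "(\<lambda>n. b n * z ^ n) sums ((1 - z) ^ K * s)"
  using assms
proof (induction K arbitrary: s)
  case (Suc K)
  have "(\<lambda>n. (psum ^^ K) b n * z ^ n) sums ((1 - z) * s)"
    using Suc.prems by (intro sums_power_series_psum) simp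
  from Suc.IH[OF this] show ?case
    by (simp add: mult_ac)
qed simp

lemma smallo_of_smallo_psum:
  fixes r :: real
  assumes "psum b \<in> o(\<lambda>n. real n powr r)"
  shows "b \<in> o(\<lambda>n. real n powr r)"
proof -
  have "(\<lambda>n. psum b (n - 1)) \<in> o(\<lambda>n. real (n - 1) powr r)"
    using assms filterlim_minus_const_nat_at_top by (rule landau_o.small.compose)
  also have "(\<lambda>n. real (n - 1) powr r) \<in> O(\<lambda>n. real n powr r)"
    by real_asymp
  finally have "(\<lambda>n. psum b n - psum b (n - 1)) \<in> o(\<lambda>n. real n powr r)"
    by (rule sum_in_smallo(2)[OF assms])
  moreover have "eventually (\<lambda>n. psum b n - psum b (n - 1) = b n) at_top"
    using eventually_gt_at_top[of 0] by eventually_elim (auto simp: gr0_conv_Suc)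
  ultimately show ?thesis
    by (simp add: landau_o.small.in_cong)
qed

lemma smallo_funpow_psum_le:
  fixes r :: real
  assumes "(psum ^^ (j + d)) b \<in> o(\<lambda>n. real n powr r)"
  shows "(psum ^^ j) b \<in> o(\<lambda>n. real n powr r)"
  using assms by (induction d) (auto intro: smallo_of_smallo_psum)

lemma tendsto_zero_smallo_mult_bigo:
  fixes r :: real
  assumes "F \<in> o(\<lambda>n. real n powr r)" and "w \<in> O(\<lambda>n. real n powr - r)"
  shows "(\<lambda>n. F n * w n) \<longlonglongrightarrow> 0"
proof -
  have "(\<lambda>n. F n * w n) \<in> o(\<lambda>n. real n powr r * real n powr - r)"
    using assms by (rule landau_o.small_big_mult)
  also have "(\<lambda>n. real n powr r * real n powr - r) \<in> O(\<lambda>_. 1)"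
    by real_asymp
  finally show ?thesis
    using smalloD_tendsto[of "\<lambda>n. F n * w n" at_top "\<lambda>_. 1"] by simp
qed

text \<open>\<open>inv_powr_diff lam x j n\<close> is the \<open>j\<close>-th difference
  \<open>\<Sum>i\<le>j. (-1)^i (j choose i) (x + n + i) powr -lam\<close>, written as a Gamma integral so that positivity and decay are visible.\<close>
definition inv_powr_diff :: "real \<Rightarrow> real \<Rightarrow> nat \<Rightarrow> nat \<Rightarrow> real" where
  "inv_powr_diff lam x j n =
     (\<integral>t. indicator {0<..} t * t powr (lam - 1) * exp (- ((x + real n) * t)) * (1 - exp (- t)) ^ j
        \<partial>lborel) / Gamma lam"

context
  fixes lam x :: real
  assumes lam: "lam > 0" and x: "x > 0"
begin

lemma integrable_inv_powr_diff_kernel: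
  "integrable lborel
     (\<lambda>t. indicator {0<..} t * t powr (lam - 1) * exp (- ((x + real n) * t)) * (1 - exp (- t)) ^ j)"
proof (rule Bochner_Integration.integrable_bound)
  show "integrable lborel (\<lambda>t. indicator {0<..} t * t powr (lam - 1) * exp (- ((x + real n) * t)))"
    using lam x by (intro integrable_gamma_kernel) auto
  have "\<bar>1 - exp (- t)\<bar> ^ j \<le> 1" if "t > 0" for t :: real
    using that by (intro power_le_one) auto
  then show "AE t in lborel.
      norm (indicator {0<..} t * t powr (lam - 1) * exp (- ((x + real n) * t)) * (1 - exp (- t)) ^ j)
      \<le> norm (indicator {0<..} t * t powr (lam - 1) * exp (- ((x + real n) * t)))"
    by (intro AE_I2) (simp add: indicator_def abs_mult power_abs mult_left_le)
qed measurable

lemma nn_integral_inv_powr_diff_kernel: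
  "(\<integral>\<^sup>+t. ennreal (indicator {0<..} t * t powr (lam - 1) * exp (- ((x + real n) * t))
       * (1 - exp (- t)) ^ j) \<partial>lborel)
     = ennreal (Gamma lam * inv_powr_diff lam x j n)"
  using Gamma_real_pos[OF lam]
  by (subst nn_integral_eq_integral[OF integrable_inv_powr_diff_kernel])
     (auto intro!: AE_I2 simp: indicator_def inv_powr_diff_def)

lemma inv_powr_diff_nonneg: "inv_powr_diff lam x j n \<ge> 0"
  unfolding inv_powr_diff_def using Gamma_real_pos[OF lam]
  by (intro divide_nonneg_pos integral_nonneg_AE AE_I2) (auto simp: indicator_def)

lemma inv_powr_diff_0: "inv_powr_diff lam x 0 n = (x + real n) powr - lam"
proof -
  have "Gamma lam \<noteq> 0"
    using Gamma_real_pos[OF lam] by simp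
  then show ?thesis
    using integral_gamma_kernel[of "x + real n" lam] lam x
    by (simp add: inv_powr_diff_def powr_minus_divide)
qed

lemma inv_powr_diff_Suc:
  "inv_powr_diff lam x (Suc j) n = inv_powr_diff lam x j n - inv_powr_diff lam x j (Suc n)"
proof -
  have "exp (- ((x + real (Suc n)) * t)) = exp (- ((x + real n) * t)) * exp (- t)" for t
    by (simp add: mult_exp_exp algebra_simps)
  then have eq: "(\<lambda>t. indicator {0<..} t * t powr (lam - 1) * exp (- ((x + real n) * t))
        * (1 - exp (- t)) ^ Suc j)
    = (\<lambda>t. indicator {0<..} t * t powr (lam - 1) * exp (- ((x + real n) * t)) * (1 - exp (- t)) ^ j
        - indicator {0<..} t * t powr (lam - 1) * exp (- ((x + real (Suc n)) * t)) * (1 - exp (- t)) ^ j)"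
    by (simp add: fun_eq_iff algebra_simps del: of_nat_Suc)
  show ?thesis
    unfolding inv_powr_diff_def eq Bochner_Integration.integral_diff[OF integrable_inv_powr_diff_kernel
      integrable_inv_powr_diff_kernel]
    by (rule diff_divide_distrib)
qed

lemma inv_powr_diff_le: "inv_powr_diff lam x j n \<le> (x + real n) powr - lam"
proof -
  have "inv_powr_diff lam x j n \<le> inv_powr_diff lam x 0 n"
    unfolding inv_powr_diff_def using Gamma_real_pos[OF lam]
    by (intro divide_right_mono integral_mono integrable_inv_powr_diff_kernel)
       (auto simp: indicator_def intro!: mult_left_le power_le_one)
  then show ?thesis
    by (simp add: inv_powr_diff_0)
qed

lemma inv_powr_diff_le_powr:
  "inv_powr_diff lam x K n \<le> Gamma (lam + real K) / Gamma lam * (x + real n) powr - (lam + real K)"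
proof -
  have "(1 - exp (- t)) ^ K \<le> t ^ K" if "t > 0" for t :: real
    using that exp_ge_add_one_self[of "- t"] by (intro power_mono) auto
  moreover have "t powr (lam + real K - 1) = t powr (lam - 1) * t ^ K" if "t > 0" for t :: real
    using that by (simp add: powr_add[symmetric] powr_realpow[symmetric] algebra_simps)
  ultimately have "(\<integral>t. indicator {0<..} t * t powr (lam - 1) * exp (- ((x + real n) * t))
        * (1 - exp (- t)) ^ K \<partial>lborel)
      \<le> (\<integral>t. indicator {0<..} t * t powr (lam + real K - 1) * exp (- ((x + real n) * t)) \<partial>lborel)"
    using lam x
    by (intro integral_mono integrable_inv_powr_diff_kernel integrable_gamma_kernel)
       (auto simp: indicator_def mult.commute mult.left_commute mult_left_mono)
  also have "\<dots> = Gamma (lam + real K) / (x + real n) powr (lam + real K)"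
    using lam x by (intro integral_gamma_kernel) auto
  finally have "inv_powr_diff lam x K n \<le> Gamma (lam + real K) / (x + real n) powr (lam + real K) / Gamma lam"
    unfolding inv_powr_diff_def using Gamma_real_pos[OF lam] by (intro divide_right_mono) auto
  also have "\<dots> = Gamma (lam + real K) / Gamma lam * (x + real n) powr - (lam + real K)"
    by (simp only: powr_minus) (simp add: field_simps)
  finally show ?thesis .
qed

lemma inv_powr_diff_bigo: "(\<lambda>N. inv_powr_diff lam x j (Suc N)) \<in> O(\<lambda>N. real N powr - lam)"
proof -
  have "(\<lambda>N. inv_powr_diff lam x j (Suc N)) \<in> O(\<lambda>N. (x + real (Suc N)) powr - lam)"
  proof (intro bigoI[where c = 1] always_eventually allI)
    fix N
    show "norm (inv_powr_diff lam x j (Suc N)) \<le> 1 * norm ((x + real (Suc N)) powr - lam)"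
      using inv_powr_diff_nonneg[of j "Suc N"] inv_powr_diff_le[of j "Suc N"] by simp
  qed
  also have "(\<lambda>N. (x + real (Suc N)) powr - lam) \<in> O(\<lambda>N. real N powr - lam)"
    using x by real_asymp
  finally show ?thesis .
qed

end

section \<open>Laplace and Stieltjes transforms\<close>

lemma funpow_deriv_cong_open:
  assumes "open S" and "\<And>y. y \<in> S \<Longrightarrow> f y = g y" and "x \<in> S"
  shows "(deriv ^^ m) f x = (deriv ^^ m) g x"
  using assms(3)
proof (induction m arbitrary: x)
  case (Suc m)
  have "eventually (\<lambda>y. (deriv ^^ m) f y = (deriv ^^ m) g y) (nhds x)"
    unfolding eventually_nhds using Suc \<open>open S\<close> by blast
  then show ?case
    by (simp add: deriv_cong_ev)
qed (simp add: assms)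

lemma completely_monotonic_on_transform:
  assumes "completely_monotonic_on S f" and "open S" and "\<And>x. x \<in> S \<Longrightarrow> f x = g x"
  shows "completely_monotonic_on S g"
  unfolding completely_monotonic_on_def
proof (intro conjI allI ballI)
  fix m x assume "x \<in> S"
  have eq: "(deriv ^^ m) f y = (deriv ^^ m) g y" if "y \<in> S" for y
    using funpow_deriv_cong_open[OF \<open>open S\<close> assms(3) that] .
  obtain e where "e > 0" "ball x e \<subseteq> S"
    using \<open>open S\<close> \<open>x \<in> S\<close> openE by blast
  show "(deriv ^^ m) g differentiable (at x)"
  proof (rule differentiable_transform_within[where s = UNIV and d = e])
    show "(deriv ^^ m) f differentiable (at x)"
      using assms(1) \<open>x \<in> S\<close> by (simp add: completely_monotonic_on_def)
    fix y assume "dist y x < e"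
    with \<open>ball x e \<subseteq> S\<close> have "y \<in> S"
      by (auto simp: dist_commute)
    then show "(deriv ^^ m) f y = (deriv ^^ m) g y"
      by (rule eq)
  qed (use \<open>e > 0\<close> in simp_all)
  show "(-1) ^ m * (deriv ^^ m) g x \<ge> 0"
    using assms(1) \<open>x \<in> S\<close> unfolding completely_monotonic_on_def eq[OF \<open>x \<in> S\<close>, symmetric]
    by blast
qed

lemma power_div_fact_le_exp: "x ^ n / fact n \<le> exp x" if "x \<ge> 0" for x :: real
proof -
  have "(\<Sum>m\<in>{n}. x ^ m /\<^sub>R fact m) \<le> (\<Sum>m. x ^ m /\<^sub>R fact m)"
    using that summable_exp_generic[of x] by (intro sum_le_suminf) auto
  then show ?thesis
    by (simp add: exp_def divide_inverse mult.commute)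
qed

lemma abs_exp_minus_taylor_le: "\<bar>exp (- u) - 1 + u\<bar> \<le> u\<^sup>2 * exp \<bar>u\<bar>"
  for u :: real
proof -
  obtain \<theta> where \<theta>: "\<bar>\<theta>\<bar> \<le> \<bar>- u\<bar>"
    "exp (- u) = (\<Sum>m<2. (- u) ^ m / fact m) + exp \<theta> / fact 2 * (- u) ^ 2"
    using Maclaurin_exp_le[of "- u" 2] by blast
  then have eq: "exp (- u) - 1 + u = exp \<theta> / 2 * u\<^sup>2"
    by (simp add: numeral_2_eq_2)
  have "exp \<theta> \<le> exp \<bar>u\<bar>"
    using \<theta>(1) by simp
  then have "exp \<theta> / 2 \<le> exp \<bar>u\<bar>"
    using exp_gt_zero[of \<theta>] by linarith
  then have "exp \<theta> / 2 * u\<^sup>2 \<le> exp \<bar>u\<bar> * u\<^sup>2"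
    by (rule mult_right_mono) simp
  then show ?thesis
    unfolding eq by (simp add: mult.commute)
qed

definition laplace_moment :: "(real \<Rightarrow> real) \<Rightarrow> nat \<Rightarrow> real \<Rightarrow> real" where
  "laplace_moment G m t = (\<integral>s. s ^ m * exp (- (s * t)) * G s \<partial>lborel)"

locale laplace_transformable =
  fixes G :: "real \<Rightarrow> real"
  assumes measurable_G [measurable]: "G \<in> borel_measurable borel"
    and nonneg_G: "\<And>s. G s \<ge> 0"
    and G_neg: "\<And>s. s < 0 \<Longrightarrow> G s = 0"
    and integrable_laplace: "\<And>t. t > 0 \<Longrightarrow> integrable lborel (\<lambda>s. exp (- (s * t)) * G s)"
begin

lemma integrable_laplace_moment:
  assumes t: "t > 0"
  shows "integrable lborel (\<lambda>s. s ^ m * exp (- (s * t)) * G s)"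
proof (rule Bochner_Integration.integrable_bound)
  define C where "C = fact m / (t/2) ^ m"
  show "integrable lborel (\<lambda>s. C * (exp (- (s * (t/2))) * G s))"
    using integrable_laplace[of "t/2"] t by simp
  have bound: "s ^ m * exp (- (s * t)) * G s \<le> C * exp (- (s * (t/2))) * G s" if "s \<ge> 0" for s
  proof -
    have "(t/2 * s) ^ m / fact m \<le> exp (t/2 * s)"
      using that t by (intro power_div_fact_le_exp) auto
    then have "s ^ m \<le> C * exp (t/2 * s)"
      using t by (simp add: C_def power_mult_distrib field_simps)
    then have "s ^ m * exp (- (s * t)) \<le> C * exp (t/2 * s) * exp (- (s * t))"
      by (intro mult_right_mono) auto
    also have "\<dots> = C * exp (- (s * (t/2)))"
      by (simp add: mult.assoc mult_exp_exp field_simps)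
    finally show ?thesis
      using nonneg_G[of s] by (intro mult_right_mono) auto
  qed
  have "C \<ge> 0"
    using t by (simp add: C_def)
  then show "AE s in lborel. norm (s ^ m * exp (- (s * t)) * G s)
      \<le> norm (C * (exp (- (s * (t/2))) * G s))"
  proof (intro AE_I2)
    fix s :: real
    show "norm (s ^ m * exp (- (s * t)) * G s) \<le> norm (C * (exp (- (s * (t/2))) * G s))"
    proof (cases "s < 0")
      case False
      then have "norm (s ^ m * exp (- (s * t)) * G s) = s ^ m * exp (- (s * t)) * G s"
        using nonneg_G[of s] by simp
      also have "\<dots> \<le> C * exp (- (s * (t/2))) * G s"
        using False by (intro bound) simp
      also have "\<dots> = norm (C * (exp (- (s * (t/2))) * G s))"
        using \<open>C \<ge> 0\<close> nonneg_G[of s] by (simp add: abs_mult)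
      finally show ?thesis .
    qed (simp add: G_neg)
  qed
qed measurable

lemma laplace_moment_nonneg: "laplace_moment G m t \<ge> 0"
  unfolding laplace_moment_def
proof (intro integral_nonneg_AE AE_I2)
  fix s :: real
  show "0 \<le> s ^ m * exp (- (s * t)) * G s"
    by (cases "s < 0") (simp_all add: G_neg nonneg_G)
qed

lemma laplace_moment_taylor_bound:
  assumes t: "t > 0" and y: "\<bar>y - t\<bar> < t/2"
  shows "\<bar>laplace_moment G m y - laplace_moment G m t + (y - t) * laplace_moment G (Suc m) t\<bar>
    \<le> (y - t)\<^sup>2 * laplace_moment G (Suc (Suc m)) (t/2)"
proof -
  define h where "h = y - t"
  have "y > 0" using y t by linarith
  define F where "F = (\<lambda>s. s ^ m * exp (- (s * y)) * G s - s ^ m * exp (- (s * t)) * G s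
    + h * (s ^ Suc m * exp (- (s * t)) * G s))"
  have integrable_F: "integrable lborel F"
    unfolding F_def using \<open>y > 0\<close> t
    by (intro Bochner_Integration.integrable_add Bochner_Integration.integrable_diff
        integrable_mult_right integrable_laplace_moment)
  have integral_F: "(\<integral>s. F s \<partial>lborel)
      = laplace_moment G m y - laplace_moment G m t + h * laplace_moment G (Suc m) t"
    unfolding F_def laplace_moment_def
    using integrable_laplace_moment[OF \<open>y > 0\<close>, of m] integrable_laplace_moment[OF t, of m]
      integrable_laplace_moment[OF t, of "Suc m"]
    by (simp add: Bochner_Integration.integral_add Bochner_Integration.integral_diff)
  have "norm (F s) \<le> h\<^sup>2 * (s ^ Suc (Suc m) * exp (- (s * (t/2))) * G s)" for s
  proof (cases "s < 0")
    case True
    then show ?thesis by (simp add: F_def G_neg)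
  next
    case False
    have "exp (- (s * y)) = exp (- (s * t)) * exp (- (s * h))"
      by (simp add: h_def mult_exp_exp algebra_simps)
    then have "F s = s ^ m * G s * exp (- (s * t)) * (exp (- (s * h)) - 1 + s * h)"
      unfolding F_def by (simp add: algebra_simps)
    then have "norm (F s) = s ^ m * G s * exp (- (s * t)) * \<bar>exp (- (s * h)) - 1 + s * h\<bar>"
      using False nonneg_G[of s] by (simp add: abs_mult)
    also have "\<dots> \<le> s ^ m * G s * exp (- (s * t)) * ((s * h)\<^sup>2 * exp \<bar>s * h\<bar>)"
      using False nonneg_G[of s] abs_exp_minus_taylor_le[of "s * h"] by (intro mult_left_mono) auto
    also have "\<dots> = h\<^sup>2 * (s ^ Suc (Suc m) * (exp (- (s * t)) * exp \<bar>s * h\<bar>) * G s)"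
      by (simp add: power2_eq_square algebra_simps)
    also have "\<dots> \<le> h\<^sup>2 * (s ^ Suc (Suc m) * exp (- (s * (t/2))) * G s)"
    proof -
      have "\<bar>s * h\<bar> = s * \<bar>h\<bar>" using False by (simp add: abs_mult)
      also have "\<dots> \<le> s * (t/2)" using False y by (intro mult_left_mono) (auto simp: h_def)
      finally have "exp (- (s * t)) * exp \<bar>s * h\<bar> \<le> exp (- (s * (t/2)))"
        by (simp add: mult_exp_exp)
      then show ?thesis
        using False nonneg_G[of s] by (intro mult_left_mono mult_right_mono) auto
    qed
    finally show ?thesis .
  qed
  then have "norm (\<integral>s. F s \<partial>lborel)
      \<le> (\<integral>s. h\<^sup>2 * (s ^ Suc (Suc m) * exp (- (s * (t/2))) * G s) \<partial>lborel)"
    using t by (intro Bochner_Integration.integral_norm_bound_integral integrable_F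
        integrable_mult_right integrable_laplace_moment) auto
  then show ?thesis
    unfolding integral_F by (simp add: laplace_moment_def h_def)
qed

lemma has_real_derivative_laplace_moment:
  assumes t: "t > 0"
  shows "(laplace_moment G m has_real_derivative - laplace_moment G (Suc m) t) (at t)"
proof -
  define B where "B = laplace_moment G (Suc (Suc m)) (t/2)"
  have "norm ((laplace_moment G m y - laplace_moment G m t) / (y - t) - - laplace_moment G (Suc m) t)
      \<le> \<bar>y - t\<bar> * B" if "y \<noteq> t" "dist y t < t/2" for y
  proof -
    define h where "h = y - t"
    have "h \<noteq> 0" and "\<bar>y - t\<bar> < t/2"
      using that by (auto simp: h_def dist_real_def)
    have bound: "\<bar>laplace_moment G m y - laplace_moment G m t + h * laplace_moment G (Suc m) t\<bar>
        \<le> h\<^sup>2 * B"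
      using laplace_moment_taylor_bound[OF t \<open>\<bar>y - t\<bar> < t/2\<close>] unfolding B_def h_def .
    have "(laplace_moment G m y - laplace_moment G m t) / (y - t) - - laplace_moment G (Suc m) t
        = (laplace_moment G m y - laplace_moment G m t + h * laplace_moment G (Suc m) t) / h"
      using \<open>h \<noteq> 0\<close> by (simp add: h_def field_simps)
    then have "norm ((laplace_moment G m y - laplace_moment G m t) / (y - t) - - laplace_moment G (Suc m) t)
        = \<bar>laplace_moment G m y - laplace_moment G m t + h * laplace_moment G (Suc m) t\<bar> / \<bar>h\<bar>"
      by (simp add: abs_divide)
    also have "\<dots> \<le> h\<^sup>2 * B / \<bar>h\<bar>"
      by (rule divide_right_mono[OF bound]) simp
    also have "\<dots> = \<bar>h\<bar> * B"
      using \<open>h \<noteq> 0\<close> by (cases "h > 0") (simp_all add: power2_eq_square)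
    finally show ?thesis
      by (simp add: h_def)
  qed
  note bound = this
  have "((\<lambda>y. (laplace_moment G m y - laplace_moment G m t) / (y - t)
      - - laplace_moment G (Suc m) t) \<longlongrightarrow> 0) (at t)"
  proof (rule Lim_null_comparison)
    show "\<forall>\<^sub>F y in at t. norm ((laplace_moment G m y - laplace_moment G m t) / (y - t)
        - - laplace_moment G (Suc m) t) \<le> \<bar>y - t\<bar> * B"
      unfolding eventually_at
    proof (intro exI[of _ "t/2"] conjI ballI impI)
      fix y :: real
      assume "y \<noteq> t \<and> dist y t < t/2"
      then show "norm ((laplace_moment G m y - laplace_moment G m t) / (y - t)
          - - laplace_moment G (Suc m) t) \<le> \<bar>y - t\<bar> * B"
        using bound by blast
    qed (use t in simp)
    have "((\<lambda>y. \<bar>y - t\<bar> * B) \<longlongrightarrow> \<bar>t - t\<bar> * B) (at t)"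
      by (intro tendsto_intros)
    then show "((\<lambda>y. \<bar>y - t\<bar> * B) \<longlongrightarrow> 0) (at t)"
      by simp
  qed
  then show ?thesis
    unfolding has_field_derivative_iff by (rule LIM_zero_iff[THEN iffD1])
qed

lemma funpow_deriv_laplace_moment:
  assumes "t > 0"
  shows "(deriv ^^ m) (laplace_moment G 0) t = (-1) ^ m * laplace_moment G m t"
  using assms
proof (induction m arbitrary: t)
  case (Suc m)
  have "eventually (\<lambda>u. (deriv ^^ m) (laplace_moment G 0) u = (-1) ^ m * laplace_moment G m u) (nhds t)"
    unfolding eventually_nhds using Suc by (intro exI[of _ "{0<..}"]) auto
  then have "(deriv ^^ Suc m) (laplace_moment G 0) t = deriv (\<lambda>u. (-1) ^ m * laplace_moment G m u) t"
    by (simp add: deriv_cong_ev)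
  also have "\<dots> = (-1) ^ m * - laplace_moment G (Suc m) t"
    by (intro DERIV_imp_deriv DERIV_cmult has_real_derivative_laplace_moment Suc.prems)
  finally show ?case
    by simp
qed simp

lemma completely_monotonic_laplace: "completely_monotonic_on {0<..} (laplace_moment G 0)"
  unfolding completely_monotonic_on_def
proof (intro conjI allI ballI)
  fix m and t :: real
  assume "t \<in> {0<..}"
  then have t: "t > 0" by simp
  have "((deriv ^^ m) (laplace_moment G 0) has_real_derivative (-1) ^ m * - laplace_moment G (Suc m) t) (at t)"
  proof (rule has_field_derivative_transform_within_open[where S = "{0<..}"])
    show "((\<lambda>u. (-1) ^ m * laplace_moment G m u) has_real_derivative
        (-1) ^ m * - laplace_moment G (Suc m) t) (at t)"
      by (intro DERIV_cmult has_real_derivative_laplace_moment t)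
  qed (use t funpow_deriv_laplace_moment in auto)
  then show "(deriv ^^ m) (laplace_moment G 0) differentiable (at t)"
    by (auto simp: real_differentiable_def)
  show "0 \<le> (-1) ^ m * (deriv ^^ m) (laplace_moment G 0) t"
    using laplace_moment_nonneg by (simp add: funpow_deriv_laplace_moment[OF t] flip: power_mult_distrib)
qed

end

lemma nn_integral_stieltjes_eq_laplace:
  fixes g :: "real \<Rightarrow> real" and x r :: real
  assumes [measurable]: "g \<in> borel_measurable borel"
    and g_nonneg: "\<And>s. g s \<ge> 0" and g_neg: "\<And>s. s < 0 \<Longrightarrow> g s = 0"
    and x: "x > 0" and r: "r > 0"
  shows "(\<integral>\<^sup>+s. ennreal (g s * (1 / (x + s) powr r)) \<partial>lborel)
    = (\<integral>\<^sup>+t. ennreal (indicator {0<..} t * t powr (r - 1) * exp (- (x * t)) / Gamma r)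
         * (\<integral>\<^sup>+s. ennreal (exp (- (s * t)) * g s) \<partial>lborel) \<partial>lborel)"
proof -
  have Gamma_r: "Gamma r > 0"
    using r by (rule Gamma_real_pos)
  define K where "K s t = ennreal (g s * (indicator {0<..} t * t powr (r - 1) * exp (- ((x + s) * t))) / Gamma r)"
    for s t
  have "ennreal (g s * (1 / (x + s) powr r)) = (\<integral>\<^sup>+t. K s t \<partial>lborel)" for s
  proof (cases "s \<ge> 0")
    case True
    have "(\<integral>\<^sup>+t. K s t \<partial>lborel) = ennreal (g s / Gamma r)
        * (\<integral>\<^sup>+t. ennreal (indicator {0<..} t * t powr (r - 1) * exp (- ((x + s) * t))) \<partial>lborel)"
      unfolding K_def using g_nonneg[of s] Gamma_r
      by (subst nn_integral_cmult[symmetric]) (auto intro!: nn_integral_cong simp: ennreal_mult'[symmetric])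
    also have "\<dots> = ennreal (g s / Gamma r) * ennreal (Gamma r / (x + s) powr r)"
      using x True r by (subst nn_integral_gamma_kernel) auto
    also have "\<dots> = ennreal (g s * (1 / (x + s) powr r))"
      using g_nonneg[of s] Gamma_r by (simp add: ennreal_mult'[symmetric])
    finally show ?thesis ..
  qed (simp add: K_def g_neg)
  then have "(\<integral>\<^sup>+s. ennreal (g s * (1 / (x + s) powr r)) \<partial>lborel)
      = (\<integral>\<^sup>+s. (\<integral>\<^sup>+t. K s t \<partial>lborel) \<partial>lborel)"
    by simp
  also have "\<dots> = (\<integral>\<^sup>+t. (\<integral>\<^sup>+s. K s t \<partial>lborel) \<partial>lborel)"
    by (rule lborel_pair.Fubini'[symmetric]) (simp add: K_def)
  also have "\<dots> = (\<integral>\<^sup>+t. ennreal (indicator {0<..} t * t powr (r - 1) * exp (- (x * t)) / Gamma r)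
         * (\<integral>\<^sup>+s. ennreal (exp (- (s * t)) * g s) \<partial>lborel) \<partial>lborel)"
  proof (intro nn_integral_cong)
    fix t :: real
    have "exp (- ((x + s) * t)) = exp (- (x * t)) * exp (- (s * t))" for s
      by (simp add: mult_exp_exp algebra_simps)
    then have "K s t = ennreal (indicator {0<..} t * t powr (r - 1) * exp (- (x * t)) / Gamma r)
        * ennreal (exp (- (s * t)) * g s)" for s
      unfolding K_def using Gamma_r g_nonneg[of s]
      by (simp add: ennreal_mult'[symmetric] indicator_def)
    then show "(\<integral>\<^sup>+s. K s t \<partial>lborel) = ennreal (indicator {0<..} t * t powr (r - 1) * exp (- (x * t)) / Gamma r)
         * (\<integral>\<^sup>+s. ennreal (exp (- (s * t)) * g s) \<partial>lborel)"
      by (simp add: nn_integral_cmult)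
  qed
  finally show ?thesis .
qed

lemma exp_minus_power: "exp (- t) ^ n = exp (- real n * t)"
  by (simp add: exp_of_nat_mult[symmetric])

locale nonneg_iterated_sums =
  fixes lam :: real and a :: "nat \<Rightarrow> real" and k :: nat
  assumes lam_pos: "lam > 0"
    and nonneg: "\<forall>n. iter_psum a k n \<ge> 0"
    and lim: "(\<lambda>n. iter_psum a k n / real n powr lam) \<longlonglongrightarrow> 0"
    and summ: "summable (\<lambda>n. iter_psum a k (Suc n) / real (Suc n) powr (1 + lam))"
begin

abbreviation S :: "nat \<Rightarrow> real" where
  "S \<equiv> iter_psum a k"

lemma S_nonneg: "S n \<ge> 0"
  using nonneg by blast

lemma smallo_funpow_psum:
  assumes "j \<le> Suc k"
  shows "(psum ^^ j) a \<in> o(\<lambda>n. real n powr lam)"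
proof -
  have "S \<in> o(\<lambda>n. real n powr lam)"
    using lim eventually_gt_at_top[of 0] by (intro smalloI_tendsto) auto
  then have "(psum ^^ (j + (Suc k - j))) a \<in> o(\<lambda>n. real n powr lam)"
    using assms by (simp add: iter_psum_eq_funpow_psum)
  then show ?thesis
    by (rule smallo_funpow_psum_le)
qed

lemma summable_S_exp:
  assumes t: "t > 0"
  shows "summable (\<lambda>n. S n * exp (- real n * t))"
proof -
  have "(\<lambda>n. S n * exp (- real n * t)) \<in> O(\<lambda>n. real n powr lam * exp (- real n * t))"
    using landau_o.small_imp_big[OF smallo_funpow_psum[of "Suc k"]]
    by (intro landau_o.big.mult_right) (simp add: iter_psum_eq_funpow_psum)
  also have "(\<lambda>n. real n powr lam * exp (- real n * t)) \<in> O(\<lambda>n. exp (- real n * (t/2)))"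
    using t by real_asymp
  finally have "(\<lambda>n. S n * exp (- real n * t)) \<in> O(\<lambda>n. exp (- real n * (t/2)))" .
  moreover have "summable (\<lambda>n. exp (- (t/2)) ^ n)"
    using t by simp
  then have "summable (\<lambda>n. norm (exp (- real n * (t/2))))"
    unfolding exp_minus_power by simp
  ultimately show ?thesis
    by (rule summable_comparison_test_bigo[rotated])
qed

lemma exp_series_sums:
  assumes t: "t > 0"
  shows "(\<lambda>n. a n * exp (- real n * t)) sums ((1 - exp (- t)) ^ Suc k * (\<Sum>n. S n * exp (- real n * t)))"
proof -
  have "(\<lambda>n. (psum ^^ Suc k) a n * exp (- t) ^ n) sums (\<Sum>n. S n * exp (- real n * t))"
    using summable_S_exp[OF t] by (simp add: summable_sums iter_psum_eq_funpow_psum exp_minus_power)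
  from sums_power_series_funpow_psum[OF this] show ?thesis
    by (simp add: exp_minus_power)
qed

definition kappa :: "real \<Rightarrow> real" where
  "kappa t = (\<Sum>n. a n * exp (- real n * t)) / t ^ (k + 1)"

lemma kappa_eq:
  assumes "t > 0"
  shows "kappa t = (1 - exp (- t)) ^ Suc k / t ^ Suc k * (\<Sum>n. S n * exp (- real n * t))"
  using sums_unique[OF exp_series_sums[OF assms]] by (simp add: kappa_def)

lemma kappa_nonneg: "t > 0 \<Longrightarrow> kappa t \<ge> 0"
  unfolding kappa_eq using S_nonneg summable_S_exp
  by (intro mult_nonneg_nonneg suminf_nonneg divide_nonneg_nonneg) auto

lemma kappa_measurable [measurable]: "kappa \<in> borel_measurable borel"
  unfolding kappa_def[abs_def] by measurable

definition mu_density :: "real \<Rightarrow> real" where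
  "mu_density t = pochhammer lam (Suc k) * (\<Sum>n. S n * bspline k (t - real n))"

lemma mu_density_nonneg: "mu_density t \<ge> 0"
  unfolding mu_density_def using lam_pos S_nonneg bspline_nonneg summable_bspline_shifts
  by (intro mult_nonneg_nonneg suminf_nonneg pochhammer_nonneg) (auto intro: less_imp_le)

lemma mu_density_nonpos: "t \<le> 0 \<Longrightarrow> mu_density t = 0"
  by (simp add: mu_density_def bspline_nonpos)

lemma mu_density_measurable [measurable]: "mu_density \<in> borel_measurable borel"
  unfolding mu_density_def[abs_def] by measurable

lemma truncated_power_sum_eq_mu_density:
  "pochhammer lam (k + 1) / fact k * (\<Sum>n | real n < t. a n * (t - real n) ^ k) = mu_density t"
proof -
  define W where "W j n = (bdiff ^^ j) (trunc_power k) (t - real n)" for j n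
  have "(\<lambda>n. a n * W 0 n) sums (\<Sum>n. (psum ^^ Suc k) a n * W (Suc k) n)"
  proof (rule iterated_abel_summation)
    show "W (Suc j) n = W j n - W j (Suc n)" for j n
      unfolding W_def funpow_bdiff_Suc by (simp add: algebra_simps)
    show "(\<lambda>N. (psum ^^ Suc j) a N * W j (Suc N)) \<longlonglongrightarrow> 0" for j
    proof -
      have "\<forall>\<^sub>F N in sequentially. W j (Suc N) = 0"
        unfolding W_def
        by (rule eventually_sequentially_Suc[THEN iffD2, OF funpow_bdiff_trunc_power_shift_eventually_zero])
      then show ?thesis
        by (intro tendsto_eventually) (auto elim: eventually_mono)
    qed
    show "summable (\<lambda>n. (psum ^^ Suc k) a n * W (Suc k) n)"
      unfolding W_def bspline_def[symmetric] by (rule summable_bspline_shifts)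
  qed
  moreover have "(\<lambda>n. a n * W 0 n) sums (\<Sum>n | real n < t. a n * (t - real n) ^ k / fact k)"
  proof -
    have "{n. real n < t} = {..<nat \<lceil>t\<rceil>}"
      by (auto; linarith)
    then have "(\<lambda>n. a n * W 0 n) sums (\<Sum>n | real n < t. a n * W 0 n)"
      by (intro sums_finite) (auto simp: W_def trunc_power_def)
    also have "(\<Sum>n | real n < t. a n * W 0 n) = (\<Sum>n | real n < t. a n * (t - real n) ^ k / fact k)"
      by (intro sum.cong) (auto simp: W_def trunc_power_def)
    finally show ?thesis .
  qed
  ultimately have spline_sum: "(\<Sum>n | real n < t. a n * (t - real n) ^ k / fact k)
      = (\<Sum>n. S n * bspline k (t - real n))"
    by (simp add: sums_iff W_def bspline_def iter_psum_eq_funpow_psum)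
  show ?thesis
    by (simp add: mu_density_def sum_divide_distrib[symmetric] flip: spline_sum)
qed

lemma laplace_mu_density:
  assumes t: "t > 0"
  shows "(\<integral>\<^sup>+s. ennreal (exp (- (s * t)) * mu_density s) \<partial>lborel)
    = ennreal (pochhammer lam (Suc k) * kappa t)"
proof -
  define P where "P = pochhammer lam (Suc k)"
  define L where "L = (1 - exp (- t)) ^ Suc k / t ^ Suc k"
  have "P > 0"
    using lam_pos by (simp add: P_def pochhammer_pos)
  have "L \<ge> 0"
    using t by (simp add: L_def)
  define T where "T s n = P * S n * (exp (- (s * t)) * bspline k (s - real n))" for s n
  have T_nonneg: "T s n \<ge> 0" for s n
    unfolding T_def using \<open>P > 0\<close> S_nonneg bspline_nonneg by simp
  have "exp (- (s * t)) * mu_density s = (\<Sum>n. T s n)" for s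
    unfolding mu_density_def T_def P_def
    using suminf_mult[OF summable_bspline_shifts, of "pochhammer lam (Suc k) * exp (- (s * t))" S k s]
    by (simp add: mult_ac)
  moreover have "summable (T s)" for s
    unfolding T_def using summable_mult[OF summable_bspline_shifts, of "P * exp (- (s * t))" S k s]
    by (simp add: mult_ac)
  ultimately have "(\<integral>\<^sup>+s. ennreal (exp (- (s * t)) * mu_density s) \<partial>lborel)
      = (\<integral>\<^sup>+s. (\<Sum>n. ennreal (T s n)) \<partial>lborel)"
    using T_nonneg by (simp add: suminf_ennreal2)
  also have "\<dots> = (\<Sum>n. \<integral>\<^sup>+s. ennreal (T s n) \<partial>lborel)"
    by (rule nn_integral_suminf) (simp add: T_def)
  also have "\<dots> = (\<Sum>n. ennreal (P * L * (S n * exp (- real n * t))))"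
  proof (rule suminf_cong)
    fix n
    have "(\<integral>\<^sup>+s. ennreal (T s n) \<partial>lborel)
        = ennreal (P * S n) * (\<integral>\<^sup>+s. ennreal (exp (- (s * t)) * bspline k (s - real n)) \<partial>lborel)"
      unfolding T_def using \<open>P > 0\<close> S_nonneg[of n]
      by (subst nn_integral_cmult[symmetric]) (auto simp: ennreal_mult' intro!: nn_integral_cong)
    also have "\<dots> = ennreal (P * L * (S n * exp (- real n * t)))"
      unfolding laplace_bspline_shift[OF t] L_def using \<open>P > 0\<close> S_nonneg[of n]
      by (simp add: ennreal_mult'[symmetric] mult_ac)
    finally show "(\<integral>\<^sup>+s. ennreal (T s n) \<partial>lborel) = ennreal (P * L * (S n * exp (- real n * t)))" .
  qed
  also have "\<dots> = ennreal (P * L * (\<Sum>n. S n * exp (- real n * t)))"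
    using summable_S_exp[OF t] \<open>P > 0\<close> \<open>L \<ge> 0\<close> S_nonneg
    by (simp add: suminf_ennreal2 summable_mult suminf_mult)
  also have "P * L * (\<Sum>n. S n * exp (- real n * t)) = P * kappa t"
    unfolding kappa_eq[OF t] L_def by simp
  finally show ?thesis
    by (simp add: P_def)
qed

lemma completely_monotonic_kappa: "completely_monotonic_on {0<..} kappa"
proof -
  define P where "P = pochhammer lam (Suc k)"
  have "P > 0"
    using lam_pos by (simp add: P_def pochhammer_pos)
  have laplace: "integrable lborel (\<lambda>s. exp (- (s * t)) * mu_density s)
      \<and> (\<integral>s. exp (- (s * t)) * mu_density s \<partial>lborel) = P * kappa t" if "t > 0" for t
    using laplace_mu_density[OF that] \<open>P > 0\<close> kappa_nonneg[OF that] mu_density_nonneg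
    unfolding P_def by (subst (asm) nn_integral_eq_integrable) (auto intro!: AE_I2)
  interpret laplace_transformable "\<lambda>s. mu_density s / P"
  proof
    fix t :: real assume "t > 0"
    then show "integrable lborel (\<lambda>s. exp (- (s * t)) * (mu_density s / P))"
      using laplace by simp
  qed (use mu_density_nonneg mu_density_nonpos \<open>P > 0\<close> in auto)
  show ?thesis
  proof (rule completely_monotonic_on_transform[OF completely_monotonic_laplace])
    fix t :: real assume "t \<in> {0<..}"
    then show "laplace_moment (\<lambda>s. mu_density s / P) 0 t = kappa t"
      using laplace[of t] \<open>P > 0\<close> by (simp add: laplace_moment_def)
  qed simp
qed

lemma summable_S_inv_powr_diff:
  assumes x: "x > 0"
  shows "summable (\<lambda>n. S n * inv_powr_diff lam x (Suc k) n)"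
proof -
  define c where "c = Gamma (lam + real (Suc k)) / Gamma lam"
  have "c > 0"
    using lam_pos by (simp add: c_def Gamma_real_pos)
  have "norm (S (Suc n) * inv_powr_diff lam x (Suc k) (Suc n))
      \<le> c * (S (Suc n) / real (Suc n) powr (1 + lam))" for n
  proof -
    have "(x + real (Suc n)) powr - (lam + real (Suc k)) \<le> real (Suc n) powr - (lam + real (Suc k))"
      using x lam_pos by (intro powr_mono2') auto
    also have "\<dots> \<le> real (Suc n) powr - (1 + lam)"
      by (intro powr_mono) auto
    finally have "c * (x + real (Suc n)) powr - (lam + real (Suc k)) \<le> c * real (Suc n) powr - (1 + lam)"
      using \<open>c > 0\<close> by simp
    then have "inv_powr_diff lam x (Suc k) (Suc n) \<le> c * real (Suc n) powr - (1 + lam)"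
      using inv_powr_diff_le_powr[OF lam_pos x, of "Suc k" "Suc n"] unfolding c_def by linarith
    then have "S (Suc n) * inv_powr_diff lam x (Suc k) (Suc n) \<le> S (Suc n) * (c * real (Suc n) powr - (1 + lam))"
      using S_nonneg by (rule mult_left_mono)
    also have "\<dots> = c * (S (Suc n) / real (Suc n) powr (1 + lam))"
      unfolding powr_minus_divide by simp
    finally show ?thesis
      using S_nonneg[of "Suc n"] inv_powr_diff_nonneg[OF lam_pos x, of "Suc k" "Suc n"] by simp
  qed
  then have "summable (\<lambda>n. S (Suc n) * inv_powr_diff lam x (Suc k) (Suc n))"
    by (rule summable_comparison_test'[OF summable_mult[OF summ]])
  then show ?thesis
    by (rule summable_Suc_iff[THEN iffD1])
qed

lemma suminf_S_inv_powr_diff_nonneg: "x > 0 \<Longrightarrow> (\<Sum>n. S n * inv_powr_diff lam x (Suc k) n) \<ge> 0"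
  using S_nonneg inv_powr_diff_nonneg[OF lam_pos] summable_S_inv_powr_diff
  by (intro suminf_nonneg) auto

lemma powr_series_sums:
  assumes x: "x > 0"
  shows "(\<lambda>n. a n / (x + real n) powr lam) sums (\<Sum>n. S n * inv_powr_diff lam x (Suc k) n)"
proof -
  have "(\<lambda>n. a n * inv_powr_diff lam x 0 n) sums (\<Sum>n. (psum ^^ Suc k) a n * inv_powr_diff lam x (Suc k) n)"
  proof (rule iterated_abel_summation)
    show "inv_powr_diff lam x (Suc j) n = inv_powr_diff lam x j n - inv_powr_diff lam x j (Suc n)" for j n
      by (rule inv_powr_diff_Suc[OF lam_pos x])
    show "(\<lambda>N. (psum ^^ Suc j) a N * inv_powr_diff lam x j (Suc N)) \<longlonglongrightarrow> 0" if "j < Suc k" for j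
    proof -
      have "(psum ^^ Suc j) a \<in> o(\<lambda>n. real n powr lam)"
        using that by (intro smallo_funpow_psum) simp
      from tendsto_zero_smallo_mult_bigo[OF this inv_powr_diff_bigo[OF lam_pos x]] show ?thesis .
    qed
    show "summable (\<lambda>n. (psum ^^ Suc k) a n * inv_powr_diff lam x (Suc k) n)"
      using summable_S_inv_powr_diff[OF x] by (simp add: iter_psum_eq_funpow_psum)
  qed
  then show ?thesis
    by (simp add: inv_powr_diff_0[OF lam_pos x] iter_psum_eq_funpow_psum powr_minus_divide)
qed

lemma nn_integral_laplace_kappa:
  assumes x: "x > 0"
  shows "(\<integral>\<^sup>+t. ennreal (indicator {0<..} t * (exp (- x * t) * t powr (lam + real k) * kappa t)) \<partial>lborel)
    = ennreal (Gamma lam * (\<Sum>n. S n * inv_powr_diff lam x (Suc k) n))"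
proof -
  define h where "h n t = S n * (indicator {0<..} t * t powr (lam - 1) * exp (- ((x + real n) * t))
    * (1 - exp (- t)) ^ Suc k)" for n t
  have h_nonneg: "h n t \<ge> 0" for n t
    unfolding h_def using S_nonneg by (simp add: indicator_def)
  define c where "c t = t powr (lam - 1) * exp (- (x * t)) * (1 - exp (- t)) ^ Suc k" for t
  have h_eq: "h n t = c t * (S n * exp (- real n * t))" if "t > 0" for n t
  proof -
    have "exp (- ((x + real n) * t)) = exp (- (x * t)) * exp (- real n * t)"
      by (simp add: mult_exp_exp algebra_simps)
    then show ?thesis
      using that by (simp add: h_def c_def mult_ac)
  qed
  have "indicator {0<..} t * (exp (- x * t) * t powr (lam + real k) * kappa t) = (\<Sum>n. h n t)" for t
  proof (cases "t > 0")
    case True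
    have "t powr (lam - 1) * t ^ Suc k = t powr (lam - 1 + real (Suc k))"
      unfolding powr_add powr_realpow[OF True] ..
    then have "t powr (lam + real k) = t powr (lam - 1) * t ^ Suc k"
      by simp
    then have "exp (- x * t) * t powr (lam + real k) * kappa t = c t * (\<Sum>n. S n * exp (- real n * t))"
      unfolding kappa_eq[OF True] c_def using True by (simp add: field_simps)
    also have "\<dots> = (\<Sum>n. h n t)"
      unfolding h_eq[OF True] by (rule suminf_mult[OF summable_S_exp[OF True], symmetric])
    finally show ?thesis
      using True by simp
  qed (simp add: h_def)
  moreover have "summable (\<lambda>n. h n t)" for t
  proof (cases "t > 0")
    case True
    show ?thesis
      unfolding h_eq[OF True] by (rule summable_mult[OF summable_S_exp[OF True]])
  qed (simp add: h_def)
  ultimately have "(\<integral>\<^sup>+t. ennreal (indicator {0<..} t * (exp (- x * t) * t powr (lam + real k) * kappa t)) \<partial>lborel)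
      = (\<integral>\<^sup>+t. (\<Sum>n. ennreal (h n t)) \<partial>lborel)"
    using h_nonneg by (simp add: suminf_ennreal2)
  also have "\<dots> = (\<Sum>n. \<integral>\<^sup>+t. ennreal (h n t) \<partial>lborel)"
    by (rule nn_integral_suminf) (simp add: h_def)
  also have "\<dots> = (\<Sum>n. ennreal (Gamma lam * (S n * inv_powr_diff lam x (Suc k) n)))"
  proof (rule suminf_cong)
    fix n
    have "(\<integral>\<^sup>+t. ennreal (h n t) \<partial>lborel) = ennreal (S n) * ennreal (Gamma lam * inv_powr_diff lam x (Suc k) n)"
      unfolding h_def nn_integral_inv_powr_diff_kernel[OF lam_pos x, symmetric] using S_nonneg[of n]
      by (subst nn_integral_cmult[symmetric]) (auto simp: ennreal_mult' intro!: nn_integral_cong)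
    then show "(\<integral>\<^sup>+t. ennreal (h n t) \<partial>lborel) = ennreal (Gamma lam * (S n * inv_powr_diff lam x (Suc k) n))"
      using S_nonneg[of n] by (simp add: ennreal_mult'[symmetric] mult_ac)
  qed
  also have "\<dots> = ennreal (Gamma lam * (\<Sum>n. S n * inv_powr_diff lam x (Suc k) n))"
    using summable_S_inv_powr_diff[OF x] S_nonneg inv_powr_diff_nonneg[OF lam_pos x] Gamma_real_pos[OF lam_pos]
    by (simp add: suminf_ennreal2 summable_mult suminf_mult)
  finally show ?thesis .
qed

lemma nn_integral_stieltjes_mu_density:
  assumes x: "x > 0"
  shows "(\<integral>\<^sup>+s. ennreal (mu_density s * (1 / (x + s) powr (lam + real k + 1))) \<partial>lborel)
    = ennreal (\<Sum>n. S n * inv_powr_diff lam x (Suc k) n)"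
proof -
  define r where "r = lam + real k + 1"
  have "r > 0" and "Gamma r > 0" and "Gamma lam > 0"
    using lam_pos by (simp_all add: r_def Gamma_real_pos)
  have "lam \<notin> \<int>\<^sub>\<le>\<^sub>0"
    using lam_pos nonpos_Ints_nonpos by fastforce
  then have "pochhammer lam (Suc k) = Gamma r / Gamma lam"
    by (simp add: pochhammer_Gamma r_def add_ac)
  then have "ennreal (indicator {0<..} t * t powr (r - 1) * exp (- (x * t)) / Gamma r)
      * ennreal (pochhammer lam (Suc k) * kappa t)
    = ennreal (indicator {0<..} t * (exp (- x * t) * t powr (lam + real k) * kappa t)) * ennreal (1 / Gamma lam)"
    for t
    using \<open>Gamma r > 0\<close> \<open>Gamma lam > 0\<close> kappa_nonneg[of t]
    by (cases "t > 0") (simp_all add: ennreal_mult'[symmetric] r_def)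
  note pointwise = this
  have "(\<integral>\<^sup>+s. ennreal (mu_density s * (1 / (x + s) powr r)) \<partial>lborel)
      = (\<integral>\<^sup>+t. ennreal (indicator {0<..} t * t powr (r - 1) * exp (- (x * t)) / Gamma r)
          * (\<integral>\<^sup>+s. ennreal (exp (- (s * t)) * mu_density s) \<partial>lborel) \<partial>lborel)"
    using \<open>r > 0\<close> x mu_density_nonneg mu_density_nonpos
    by (intro nn_integral_stieltjes_eq_laplace) auto
  also have "\<dots> = (\<integral>\<^sup>+t. ennreal (indicator {0<..} t * (exp (- x * t) * t powr (lam + real k) * kappa t))
          * ennreal (1 / Gamma lam) \<partial>lborel)"
  proof (intro nn_integral_cong)
    fix t :: real
    show "ennreal (indicator {0<..} t * t powr (r - 1) * exp (- (x * t)) / Gamma r)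
          * (\<integral>\<^sup>+s. ennreal (exp (- (s * t)) * mu_density s) \<partial>lborel)
        = ennreal (indicator {0<..} t * (exp (- x * t) * t powr (lam + real k) * kappa t))
          * ennreal (1 / Gamma lam)"
      using pointwise[of t] by (cases "t > 0") (simp_all add: laplace_mu_density)
  qed
  also have "\<dots> = (\<integral>\<^sup>+t. ennreal (indicator {0<..} t * (exp (- x * t) * t powr (lam + real k) * kappa t))
      \<partial>lborel) * ennreal (1 / Gamma lam)"
    by (rule nn_integral_multc) measurable
  also have "\<dots> = ennreal (\<Sum>n. S n * inv_powr_diff lam x (Suc k) n)"
    unfolding nn_integral_laplace_kappa[OF x] using \<open>Gamma lam > 0\<close>
    by (subst ennreal_mult''[symmetric]) simp_all
  finally show ?thesis
    by (simp add: r_def)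
qed

lemma stieltjes_representation:
  assumes x: "x > 0"
  shows "integrable (density lborel (\<lambda>t. ennreal (mu_density t))) (\<lambda>t. 1 / (x + t) powr (lam + real k + 1))
    \<and> (\<Sum>n. a n / (x + real n) powr lam)
        = (\<integral>t. 1 / (x + t) powr (lam + real k + 1) \<partial>density lborel (\<lambda>t. ennreal (mu_density t)))"
proof -
  have "integrable lborel (\<lambda>s. mu_density s * (1 / (x + s) powr (lam + real k + 1)))
      \<and> (\<integral>s. mu_density s * (1 / (x + s) powr (lam + real k + 1)) \<partial>lborel)
          = (\<Sum>n. S n * inv_powr_diff lam x (Suc k) n)"
    using nn_integral_stieltjes_mu_density[OF x] mu_density_nonneg suminf_S_inv_powr_diff_nonneg[OF x]
    by (subst (asm) nn_integral_eq_integrable) (auto intro!: AE_I2)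
  then show ?thesis
    using mu_density_nonneg sums_unique[OF powr_series_sums[OF x]]
    by (simp add: integrable_density integral_density)
qed

lemma gen_stieltjes_series: "gen_stieltjes (lam + real k + 1) (\<lambda>x. \<Sum>n. a n / (x + real n) powr lam)"
  unfolding gen_stieltjes_def
proof (intro exI[of _ "density lborel (\<lambda>t. ennreal (mu_density t))"] exI[of _ 0] conjI allI impI)
  have "emeasure (density lborel (\<lambda>t. ennreal (mu_density t))) {..<0}
      = (\<integral>\<^sup>+t. ennreal (mu_density t) * indicator {..<0} t \<partial>lborel)"
    by (rule emeasure_density) auto
  also have "\<dots> = 0"
  proof -
    have "ennreal (mu_density t) * indicator {..<0} t = 0" for t
      by (cases "t < 0") (simp_all add: mu_density_nonpos)
    then show ?thesis
      by (simp only:) simp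
  qed
  finally show "emeasure (density lborel (\<lambda>t. ennreal (mu_density t))) {..<0} = 0" .
qed (use stieltjes_representation in auto)

lemma laplace_representation:
  assumes x: "x > 0"
  shows "set_integrable lborel {0<..} (\<lambda>t. exp (- x * t) * t powr (lam + real k) * kappa t)
    \<and> (\<Sum>n. a n / (x + real n) powr lam)
        = 1 / Gamma lam * (LBINT t:{0<..}. exp (- x * t) * t powr (lam + real k) * kappa t)"
proof -
  have "Gamma lam > 0"
    using lam_pos by (rule Gamma_real_pos)
  then have "integrable lborel (\<lambda>t. indicator {0<..} t * (exp (- x * t) * t powr (lam + real k) * kappa t))
      \<and> (\<integral>t. indicator {0<..} t * (exp (- x * t) * t powr (lam + real k) * kappa t) \<partial>lborel)
          = Gamma lam * (\<Sum>n. S n * inv_powr_diff lam x (Suc k) n)"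
    using nn_integral_laplace_kappa[OF x] kappa_nonneg suminf_S_inv_powr_diff_nonneg[OF x]
    by (subst (asm) nn_integral_eq_integrable) (auto intro!: AE_I2 simp: indicator_def)
  then show ?thesis
    unfolding set_integrable_def set_lebesgue_integral_def
    using sums_unique[OF powr_series_sums[OF x]] \<open>Gamma lam > 0\<close> by simp
qed

end

theorem proposition6p2:
  fixes lam :: real and a :: "nat \<Rightarrow> real" and k :: nat
  assumes lam_pos: "lam > 0"
    and nonneg: "\<forall>n. iter_psum a k n \<ge> 0"
    and lim: "(\<lambda>n. iter_psum a k n / real n powr lam) \<longlonglongrightarrow> 0"
    and summ: "summable (\<lambda>n. iter_psum a k (Suc n) / real (Suc n) powr (1 + lam))"
  defines "f \<equiv> (\<lambda>x. \<Sum>n. a n / (x + real n) powr lam)"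
    and "g \<equiv> (\<lambda>t. pochhammer lam (k + 1) / fact k *
                   (\<Sum>n | real n < t. a n * (t - real n) ^ k))"
    and "\<kappa> \<equiv> (\<lambda>t. (\<Sum>n. a n * exp (- real n * t)) / t ^ (k + 1))"
  shows "(\<forall>x>0. summable (\<lambda>n. a n / (x + real n) powr lam))
    \<and> gen_stieltjes (lam + real k + 1) f
    \<and> (AE t in lborel. g t \<ge> 0)
    \<and> (\<forall>x>0. integrable (density lborel (\<lambda>t. ennreal (g t)))
                   (\<lambda>t. 1 / (x + t) powr (lam + real k + 1))
           \<and> f x = (\<integral>t. 1 / (x + t) powr (lam + real k + 1)
                       \<partial>(density lborel (\<lambda>t. ennreal (g t)))))
    \<and> (\<forall>t>0. summable (\<lambda>n. a n * exp (- real n * t)))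
    \<and> (\<forall>x>0. set_integrable lborel {0<..} (\<lambda>t. exp (- x * t) * t powr (lam + real k) * \<kappa> t)
           \<and> f x = 1 / Gamma lam *
               (LBINT t:{0<..}. exp (- x * t) * t powr (lam + real k) * \<kappa> t))
    \<and> completely_monotonic_on {0<..} \<kappa>"
proof -
  interpret nonneg_iterated_sums lam a k
    using assms by unfold_locales
  have "g = mu_density"
    unfolding g_def using truncated_power_sum_eq_mu_density by blast
  moreover have "\<kappa> = kappa"
    unfolding \<kappa>_def kappa_def ..
  ultimately show ?thesis
    unfolding f_def
    using powr_series_sums[THEN sums_summable] gen_stieltjes_series stieltjes_representation mu_density_nonneg
      exp_series_sums[THEN sums_summable] laplace_representation completely_monotonic_kappa
    by simp
qed

end
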